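(* Let $n\ge4$, $j\ge0$, $b\in B$, $(\mu_i)_{i=1}^n\in\mathbb Z^n$ and $\mu=(-\mu_1-\mu_2)\Lambda_0+(\mu_1-\mu_2)\Lambda_1+\cdots+(\mu_{n-1}-\mu_n)\Lambda_{n-1}+(\mu_{n-1}+\mu_n)\Lambda_n$. Let $s=n$ if $b\in\{\bar n,\dots,\bar1\}$ and $s=1$ if $b\in\{1,\dots,n\}$. Then $$g_j(b,\mu)=\sum_{\gamma}q^{\frac12\sum_{i\in B}\gamma_i(\gamma_i-1)-\gamma_s\gamma_{\bar s}+\sum_{i\in B}H(b\otimes i)\gamma_i}\begin{bmatrix}j\\ \gamma\end{bmatrix}_q,$$ the sum over $\gamma=(\gamma_i)_{i\in B}\in\mathbb Z_{\ge0}^{2n}$ with $\gamma_i-\gamma_{\bar i}=\mu_i$ for $i=1,\dots,n$ and $\sum_{i\in B}\gamma_i=j$.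
   Context: Affine algebra $D^{(1)}_n$ with fundamental weights $\Lambda_0,\dots,\Lambda_n$, $P_{cl}=\bigoplus\mathbb Z\Lambda_i$. $B=\{1,\dots,n,\bar n,\dots,\bar1\}$ with partial order $1\prec\cdots\prec n-1\prec n,\bar n\prec\overline{n-1}\prec\cdots\prec\bar1$ ($n$ and $\bar n$ incomparable). Weights: $wt(\bar b)=-wt(b)$, $wt(b)=\Lambda_b-\Lambda_{b-1}$ for $b\ne2,n-1$ (so $wt(1)=\Lambda_1-\Lambda_0$, $wt(n)=\Lambda_n-\Lambda_{n-1}$), $wt(2)=\Lambda_2-\Lambda_1-\Lambda_0$, $wt(n-1)=\Lambda_n+\Lambda_{n-1}-\Lambda_{n-2}$. Energy function: $H(b\otimes b')=0$ if $b\prec b'$, $=1$ if $b\succeq b'$, except $H(n\otimes\bar n)=H(\bar n\otimes n)=0$ and $H(1\otimes\bar1)=-1$. For $j\ge0$, $b\in B$, $\mu\in P_{cl}$: $g_j(b,\mu)=\sum q^{\sum_{i=1}^j iH(b_{i+1}\otimes b_i)}$, summed over $(b_j,\dots,b_1)\in B^j$ with $wt(b_j)+\cdots+wt(b_1)=\mu$, where $b_{j+1}=b$. For an integer vector $\gamma=(\gamma_b)_{b\in B}$: $\begin{bmatrix}j\\ \gamma\end{bmatrix}_q=(q)_j/\prod_{b\in B}(q)_{\gamma_b}$ if $\sum_b\gamma_b=j$ and all $\gamma_b\ge0$, and $0$ otherwise; $(q)_m=\prod_{i=1}^m(1-q^i)$. *)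

theory Defs
  imports "HOL-Computational_Algebra.Formal_Laurent_Series" "HOL-Library.Function_Algebras"
begin

text \<open>Elements of the crystal B = {1,...,n, bar n, ..., bar 1}: U i stands for i, Bar i for bar i.\<close>
datatype bel = U nat | Bar nat

definition Bset :: "nat \<Rightarrow> bel set" where
  "Bset n = U ` {1..n} \<union> Bar ` {1..n}"

text \<open>Weights in P_cl, represented as coefficient functions k \<mapsto> coefficient of Lambda_k.\<close>
definition Lam :: "nat \<Rightarrow> (nat \<Rightarrow> int)" where
  "Lam k = (\<lambda>i. if i = k then 1 else 0)"

definition wtU :: "nat \<Rightarrow> nat \<Rightarrow> (nat \<Rightarrow> int)" where
  "wtU n b = (if b = 2 then Lam 2 - Lam 1 - Lam 0
              else if b = n - 1 then Lam n + Lam (n - 1) - Lam (n - 2)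
              else Lam b - Lam (b - 1))"

fun wt :: "nat \<Rightarrow> bel \<Rightarrow> (nat \<Rightarrow> int)" where
  "wt n (U b) = wtU n b"
| "wt n (Bar b) = - wtU n b"

text \<open>Position in the chain 1 < ... < n-1 < {n, bar n} < bar(n-1) < ... < bar 1.\<close>
fun rk :: "nat \<Rightarrow> bel \<Rightarrow> nat" where
  "rk n (U i) = i"
| "rk n (Bar i) = 2 * n + 1 - i"

definition prec :: "nat \<Rightarrow> bel \<Rightarrow> bel \<Rightarrow> bool" where
  "prec n b b' \<longleftrightarrow> rk n b < rk n b' \<and> \<not> ((b = U n \<and> b' = Bar n) \<or> (b = Bar n \<and> b' = U n))"

definition H :: "nat \<Rightarrow> bel \<Rightarrow> bel \<Rightarrow> int" where
  "H n b b' = (if (b = U n \<and> b' = Bar n) \<or> (b = Bar n \<and> b' = U n) then 0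
               else if b = U 1 \<and> b' = Bar 1 then -1
               else if prec n b b' then 0
               else 1)"

text \<open>q as the formal variable of Laurent series; q^e for integer e.\<close>
abbreviation qpow :: "int \<Rightarrow> rat fls" where
  "qpow e \<equiv> fls_X_intpow e"

definition qpoch :: "nat \<Rightarrow> rat fls" where
  "qpoch m = (\<Prod>i = 1..m. 1 - qpow (int i))"

definition qmultinom :: "nat \<Rightarrow> nat \<Rightarrow> (bel \<Rightarrow> int) \<Rightarrow> rat fls" where
  "qmultinom n j \<gamma> = (if (\<Sum>b\<in>Bset n. \<gamma> b) = int j \<and> (\<forall>b\<in>Bset n. \<gamma> b \<ge> 0)
      then qpoch j / (\<Prod>b\<in>Bset n. qpoch (nat (\<gamma> b))) else 0)"

text \<open>A path (b_j,...,b_1) is a list xs of length j with xs ! (i-1) = b_i; b_{j+1} = b.\<close>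
definition pathel :: "bel \<Rightarrow> bel list \<Rightarrow> nat \<Rightarrow> bel" where
  "pathel b xs i = (if i = length xs + 1 then b else xs ! (i - 1))"

definition gfun :: "nat \<Rightarrow> nat \<Rightarrow> bel \<Rightarrow> (nat \<Rightarrow> int) \<Rightarrow> rat fls" where
  "gfun n j b \<mu> = (\<Sum>xs\<in>{xs. length xs = j \<and> set xs \<subseteq> Bset n \<and> (\<Sum>x\<leftarrow>xs. wt n x) = \<mu>}.
      qpow (\<Sum>i = 1..j. int i * H n (pathel b xs (i + 1)) (pathel b xs i)))"

definition muwt :: "nat \<Rightarrow> (nat \<Rightarrow> int) \<Rightarrow> (nat \<Rightarrow> int)" where
  "muwt n m = (\<lambda>k. if k = 0 then - m 1 - m 2
                   else if k < n then m k - m (k + 1)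
                   else if k = n then m (n - 1) + m n
                   else 0)"

end

theory Submission
  imports Defs
begin

text \<open>Both sides are coefficients of power series in \<open>z\<close> over \<open>\<rat>((q))\<close>. Let \<open>P\<^sub>g\<close> be the
  series whose \<open>z^j\<close>-coefficient sums \<open>\<Prod>\<^sub>x q^(\<gamma>(x)(\<gamma>(x)-1)/2 + g(x)\<gamma>(x)) / (q)_\<gamma>(x)\<close> over
  the occupations \<open>\<gamma>\<close> of the theorem with \<open>|\<gamma>| = j\<close>, and let \<open>R\<^sub>e = \<Sum>\<^sub>t q^(e t) z^(2t) / (q)_t\<close>.
  The identity \<open>\<Sum>\<^sub>t q^(-t) / (q)_t c(a-t) c(a'-t) = q^(-a a') c(a) c(a')\<close>, where
  \<open>c(a) = q^(a(a-1)/2) / (q)_a\<close>, trades the cross term \<open>-\<gamma>(s)\<gamma>(s')\<close> (\<open>s'\<close> the bar of \<open>s\<close>)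
  for a number \<open>t\<close> of extra pairs \<open>(s, s')\<close>. Hence the right-hand side is \<open>(q)_j\<close> times the
  \<open>z^j\<close>-coefficient of \<open>F\<^sub>b = R\<^sub>e P\<^bsub>H(b,-)\<^esub>\<close> with \<open>e = H(b,s) + H(b,s') - 1\<close>.

  The left-hand side obeys \<open>g_(j+1)(b,\<mu>) = \<Sum>\<^sub>c q^((j+1) H(b,c)) g_j(c, \<mu> - wt c)\<close>, so it suffices
  that \<open>F\<^sub>b(z) - F\<^sub>b(q z) = \<Sum>\<^sub>c q^H(b,c) z F\<^sub>c(q^H(b,c) z)\<close>. As
  \<open>F\<^sub>b(q z) = R\<^bsub>e+2\<^esub> P\<^bsub>H(b,-)+1\<^esub>\<close>, this follows by raising the exponent of one element \<open>c\<close>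
  of \<open>B\<close> at a time, \<open>P\<^sub>g = P\<^bsub>g+\<delta>c\<^esub> + q^g(c) z P\<^bsub>g+\<delta>c\<^esub>\<close> (the last with \<open>\<mu> - wt c\<close>), and
  \<open>e\<close> twice, \<open>R\<^sub>e = R\<^bsub>e+1\<^esub> + q^e z^2 R\<^sub>e\<close>. In a suitable order of \<open>B\<close>, depending on \<open>b\<close>,
  each raising splits off exactly the summand of \<open>c\<close>, and the two steps of \<open>R\<close> compensate
  the exceptional energies at the pairs \<open>(n, n')\<close> and \<open>(1, 1')\<close>.\<close>

section \<open>Powers of \<open>q\<close> and the pair convolution\<close>

text \<open>\<^term>\<open>qpow e\<close> unfolds to a \<^const>\<open>fls_shift\<close> of \<open>1\<close>, which the simplifier
  rewrites eagerly; an opaque copy keeps powers of \<open>q\<close> intact.\<close>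
definition qpower :: "int \<Rightarrow> rat fls" where
  "qpower e = qpow e"

lemma qpower_add: "qpower (a + b) = qpower a * qpower b"
  unfolding qpower_def by (simp add: fls_X_intpow_times_fls_X_intpow)

lemma qpower_0 [simp]: "qpower 0 = 1"
  by (simp add: qpower_def)

lemma qpower_nonzero [simp]: "qpower e \<noteq> 0"
  by (simp add: qpower_def)

lemma qpower_sum: "finite A \<Longrightarrow> (\<Prod>x\<in>A. qpower (f x)) = qpower (\<Sum>x\<in>A. f x)"
  by (induction A rule: finite_induct) (auto simp: qpower_add)

lemma qpower_eq_1_iff [simp]: "qpower e = 1 \<longleftrightarrow> e = 0"
proof
  assume "qpower e = 1"
  then have "fls_subdegree (qpow e) = fls_subdegree (1 :: rat fls)"
    by (simp add: qpower_def)
  then show "e = 0" by simp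
qed simp

lemma qpoch_0 [simp]: "qpoch 0 = 1"
  by (simp add: qpoch_def)

lemma qpoch_Suc: "qpoch (Suc k) = qpoch k * (1 - qpower (int (Suc k)))"
  by (simp add: qpoch_def qpower_def)

lemma qpoch_nonzero [simp]: "qpoch k \<noteq> 0"
  by (induction k) (simp_all add: qpoch_Suc)

definition qexp_coeff :: "nat \<Rightarrow> rat fls" where
  "qexp_coeff a = qpower (int a * (int a - 1) div 2) / qpoch a"

lemma qexp_coeff_0 [simp]: "qexp_coeff 0 = 1"
  by (simp add: qexp_coeff_def)

lemma qexp_coeff_Suc: "qexp_coeff (Suc a) * (1 - qpower (int (Suc a))) = qpower (int a) * qexp_coeff a"
proof -
  have "int (Suc a) * (int (Suc a) - 1) div 2 = int a + int a * (int a - 1) div 2"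
    by (simp add: algebra_simps)
  then show ?thesis
    by (simp add: qexp_coeff_def qpoch_Suc qpower_add del: of_nat_Suc)
qed

lemma qexp_coeff_Suc_diff:
  assumes "t \<le> a"
  shows "qpower (int t) * (qexp_coeff (Suc a - t) * (1 - qpower (int (Suc a - t)))) = qpower (int a) * qexp_coeff (a - t)"
  using assms
  by (simp add: Suc_diff_le qexp_coeff_Suc of_nat_diff mult.assoc[symmetric] flip: qpower_add del: of_nat_Suc)

lemma qpower_div_qpoch_Suc:
  "qpower (- int (Suc t)) / qpoch (Suc t) * (1 - qpower (int (Suc t))) = qpower (-1) * (qpower (- int t) / qpoch t)"
  by (simp add: qpoch_Suc flip: qpower_add)

definition pair_conv :: "nat \<Rightarrow> nat \<Rightarrow> rat fls" where
  "pair_conv a b = (\<Sum>t\<le>min a b. qpower (- int t) / qpoch t * qexp_coeff (a - t) * qexp_coeff (b - t))"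

lemma pair_conv_Suc_Suc:
  "pair_conv (Suc a) (Suc b) * (1 - qpower (int (Suc a))) = qpower (int a) * pair_conv a (Suc b) + qpower (-1) * pair_conv a b"
proof -
  let ?r = "\<lambda>t. qpower (- int t) / qpoch t"
  let ?M = "min (Suc a) (Suc b)"
  have "pair_conv (Suc a) (Suc b) * (1 - qpower (int (Suc a)))
      = (\<Sum>t\<le>?M. ?r t * qexp_coeff (Suc b - t) * qpower (int t) * (qexp_coeff (Suc a - t) * (1 - qpower (int (Suc a - t)))))
      + (\<Sum>t\<le>?M. ?r t * (1 - qpower (int t)) * qexp_coeff (Suc a - t) * qexp_coeff (Suc b - t))"
    unfolding pair_conv_def sum_distrib_right sum.distrib[symmetric]
  proof (rule sum.cong[OF refl])
    fix t assume "t \<in> {..?M}"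
    then have "qpower (int (Suc a)) = qpower (int t) * qpower (int (Suc a - t))"
      by (simp add: of_nat_diff flip: qpower_add)
    then show "?r t * qexp_coeff (Suc a - t) * qexp_coeff (Suc b - t) * (1 - qpower (int (Suc a)))
      = ?r t * qexp_coeff (Suc b - t) * qpower (int t) * (qexp_coeff (Suc a - t) * (1 - qpower (int (Suc a - t))))
      + ?r t * (1 - qpower (int t)) * qexp_coeff (Suc a - t) * qexp_coeff (Suc b - t)"
      by (simp only: algebra_simps mult_1_left)
  qed
  also have "(\<Sum>t\<le>?M. ?r t * qexp_coeff (Suc b - t) * qpower (int t) * (qexp_coeff (Suc a - t) * (1 - qpower (int (Suc a - t)))))
      = (\<Sum>t\<le>min a (Suc b). qpower (int a) * (?r t * qexp_coeff (a - t) * qexp_coeff (Suc b - t)))"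
  proof (rule sum.mono_neutral_cong_right)
    show "\<forall>t\<in>{..?M} - {..min a (Suc b)}. ?r t * qexp_coeff (Suc b - t) * qpower (int t)
        * (qexp_coeff (Suc a - t) * (1 - qpower (int (Suc a - t)))) = 0"
      by auto
    fix t assume "t \<in> {..min a (Suc b)}"
    then have "t \<le> a"
      by simp
    then have "qpower (int t) * (qexp_coeff (Suc a - t) * (1 - qpower (int (Suc a - t))))
        = qpower (int a) * qexp_coeff (a - t)"
      by (rule qexp_coeff_Suc_diff)
    then show "?r t * qexp_coeff (Suc b - t) * qpower (int t) * (qexp_coeff (Suc a - t) * (1 - qpower (int (Suc a - t))))
        = qpower (int a) * (?r t * qexp_coeff (a - t) * qexp_coeff (Suc b - t))"
      by (metis (no_types, lifting) mult.commute mult.left_commute)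
  qed auto
  also have "(\<Sum>t\<le>?M. ?r t * (1 - qpower (int t)) * qexp_coeff (Suc a - t) * qexp_coeff (Suc b - t))
      = (\<Sum>t\<le>min a b. qpower (-1) * (?r t * qexp_coeff (a - t) * qexp_coeff (b - t)))"
  proof -
    have "?r (Suc t) * (1 - qpower (int (Suc t))) * qexp_coeff (Suc a - Suc t) * qexp_coeff (Suc b - Suc t)
        = qpower (-1) * (?r t * qexp_coeff (a - t) * qexp_coeff (b - t))" for t
      unfolding diff_Suc_Suc qpower_div_qpoch_Suc by (simp only: mult.assoc)
    then show ?thesis
      unfolding min_Suc_Suc sum.atMost_Suc_shift by simp
  qed
  finally show ?thesis
    by (simp add: pair_conv_def sum_distrib_left)
qed

lemma pair_conv_eq: "pair_conv a b = qpower (- (int a * int b)) * qexp_coeff a * qexp_coeff b"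
proof (induction a arbitrary: b)
  case 0
  then show ?case by (simp add: pair_conv_def)
next
  case (Suc a)
  show ?case
  proof (cases b)
    case 0
    then show ?thesis by (simp add: pair_conv_def)
  next
    case (Suc b')
    let ?c = "qexp_coeff a * qexp_coeff (Suc b')"
    have c_b': "qexp_coeff b' = qpower (- int b') * (qexp_coeff (Suc b') * (1 - qpower (int (Suc b'))))"
      unfolding qexp_coeff_Suc mult.assoc[symmetric] qpower_add[symmetric] by simp
    have "pair_conv (Suc a) (Suc b') * (1 - qpower (int (Suc a)))
        = qpower (int a) * (qpower (- (int a * int (Suc b'))) * ?c)
          + qpower (-1) * (qpower (- (int a * int b')) * qexp_coeff a * qexp_coeff b')"
      unfolding pair_conv_Suc_Suc Suc.IH by (simp only: mult_ac)
    also have "\<dots> = ?c * (qpower (- (int a * int b')) + qpower (- 1 - int a * int b' - int b') * (1 - qpower (int (Suc b'))))"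
      unfolding c_b' by (simp add: algebra_simps flip: qpower_add)
    also have "\<dots> = ?c * qpower (- 1 - int a * int b' - int b')"
      by (simp add: algebra_simps flip: qpower_add)
    also have "\<dots> = qpower (- (int (Suc a) * int (Suc b'))) * (qexp_coeff (Suc a) * (1 - qpower (int (Suc a)))) * qexp_coeff (Suc b')"
      unfolding qexp_coeff_Suc by (simp add: algebra_simps flip: qpower_add)
    finally show ?thesis
      using Suc by (simp add: mult_ac)
  qed
qed

section \<open>Occupation series\<close>

lemma U_in_Bset [simp]: "U i \<in> Bset n \<longleftrightarrow> 1 \<le> i \<and> i \<le> n"
  and Bar_in_Bset [simp]: "Bar i \<in> Bset n \<longleftrightarrow> 1 \<le> i \<and> i \<le> n"
  by (auto simp: Bset_def)

lemma finite_Bset [simp]: "finite (Bset n)"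
  by (simp add: Bset_def)

definition occupations :: "nat \<Rightarrow> (nat \<Rightarrow> int) \<Rightarrow> nat \<Rightarrow> (bel \<Rightarrow> int) set" where
  "occupations n m j = {\<gamma>. (\<forall>x\<in>Bset n. \<gamma> x \<ge> 0) \<and> (\<forall>x. x \<notin> Bset n \<longrightarrow> \<gamma> x = 0)
     \<and> (\<forall>i\<in>{1..n}. \<gamma> (U i) - \<gamma> (Bar i) = m i) \<and> (\<Sum>x\<in>Bset n. \<gamma> x) = int j}"

definition occ_weight :: "nat \<Rightarrow> (bel \<Rightarrow> int) \<Rightarrow> (bel \<Rightarrow> int) \<Rightarrow> rat fls" where
  "occ_weight n g \<gamma> = (\<Prod>x\<in>Bset n. qexp_coeff (nat (\<gamma> x)) * qpower (g x * \<gamma> x))"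

definition occ_series :: "nat \<Rightarrow> (bel \<Rightarrow> int) \<Rightarrow> (nat \<Rightarrow> int) \<Rightarrow> rat fls fps" where
  "occ_series n g m = Abs_fps (\<lambda>j. \<Sum>\<gamma>\<in>occupations n m j. occ_weight n g \<gamma>)"

fun eps_wt :: "bel \<Rightarrow> nat \<Rightarrow> int" where
  "eps_wt (U i) = (\<lambda>k. if k = i then 1 else 0)"
| "eps_wt (Bar i) = (\<lambda>k. if k = i then -1 else 0)"

lemma occupations_le:
  assumes "\<gamma> \<in> occupations n m j" "x \<in> Bset n"
  shows "\<gamma> x \<le> int j"
proof -
  have "\<gamma> x \<le> (\<Sum>y\<in>Bset n. \<gamma> y)"
    using assms by (intro member_le_sum) (auto simp: occupations_def)
  with assms show ?thesis
    by (simp add: occupations_def)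
qed

lemma finite_occupations [simp]: "finite (occupations n m j)"
proof (rule finite_subset)
  show "occupations n m j \<subseteq> {\<gamma>. \<forall>x. (x \<in> Bset n \<longrightarrow> \<gamma> x \<in> {0..int j}) \<and> (x \<notin> Bset n \<longrightarrow> \<gamma> x = 0)}"
    using occupations_le by (auto simp: occupations_def)
  show "finite {\<gamma>. \<forall>x. (x \<in> Bset n \<longrightarrow> \<gamma> x \<in> {0..int j}) \<and> (x \<notin> Bset n \<longrightarrow> \<gamma> x = 0)}"
    by (rule finite_set_of_finite_funs) auto
qed

lemma occupations_0: "occupations n m 0 = (if \<forall>i\<in>{1..n}. m i = 0 then {\<lambda>_. 0} else {})"
proof -
  have zero: "\<gamma> = (\<lambda>_. 0)" if "\<gamma> \<in> occupations n m 0" for \<gamma>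
  proof
    fix x
    show "\<gamma> x = 0"
      using that occupations_le[OF that, of x] by (cases "x \<in> Bset n") (auto simp: occupations_def)
  qed
  have "\<gamma> \<in> occupations n m 0 \<longleftrightarrow> \<gamma> = (\<lambda>_. 0) \<and> (\<forall>i\<in>{1..n}. m i = 0)" for \<gamma>
  proof
    assume "\<gamma> \<in> occupations n m 0"
    with zero[OF this] show "\<gamma> = (\<lambda>_. 0) \<and> (\<forall>i\<in>{1..n}. m i = 0)"
      by (auto simp: occupations_def)
  qed (auto simp: occupations_def)
  then show ?thesis
    by auto
qed

lemma fun_upd_in_occupations:
  assumes c: "c \<in> Bset n" and \<gamma>: "\<gamma> \<in> occupations n m j"
    and "v \<ge> 0" and "int j' = int j - \<gamma> c + v" and "m' = m + (\<lambda>i. (v - \<gamma> c) * eps_wt c i)"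
  shows "\<gamma>(c := v) \<in> occupations n m' j'"
proof -
  have "(\<Sum>x\<in>Bset n. (\<gamma>(c := v)) x) = v + (\<Sum>x\<in>Bset n - {c}. \<gamma> x)"
    using c by (simp add: sum.remove)
  also have "\<dots> = int j'"
    using assms by (simp add: sum.remove occupations_def)
  finally have "(\<Sum>x\<in>Bset n. (\<gamma>(c := v)) x) = int j'" .
  moreover have "(\<gamma>(c := v)) (U i) - (\<gamma>(c := v)) (Bar i) = m' i" if "i \<in> {1..n}" for i
  proof -
    have "\<gamma> (U i) - \<gamma> (Bar i) = m i"
      using \<gamma> that by (simp add: occupations_def)
    with assms show ?thesis
      by (cases c) auto
  qed
  ultimately show ?thesis
    using assms by (auto simp: occupations_def)
qed

lemma occupations_raise:
  assumes c: "c \<in> Bset n"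
  shows "(\<lambda>\<gamma>. \<gamma>(c := \<gamma> c + 1)) ` occupations n (m - eps_wt c) j
    = {\<gamma> \<in> occupations n m (Suc j). \<gamma> c \<noteq> 0}"
proof (intro equalityI subsetI)
  fix \<gamma> assume "\<gamma> \<in> (\<lambda>\<gamma>. \<gamma>(c := \<gamma> c + 1)) ` occupations n (m - eps_wt c) j"
  then obtain \<delta> where \<delta>: "\<delta> \<in> occupations n (m - eps_wt c) j" and "\<gamma> = \<delta>(c := \<delta> c + 1)"
    by auto
  moreover have "\<delta> c \<ge> 0"
    using \<delta> c by (simp add: occupations_def)
  moreover have "\<delta>(c := \<delta> c + 1) \<in> occupations n m (Suc j)"
    using \<open>\<delta> c \<ge> 0\<close> by (intro fun_upd_in_occupations[OF c \<delta>]) auto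
  ultimately show "\<gamma> \<in> {\<gamma> \<in> occupations n m (Suc j). \<gamma> c \<noteq> 0}"
    by simp
next
  fix \<gamma> assume \<gamma>: "\<gamma> \<in> {\<gamma> \<in> occupations n m (Suc j). \<gamma> c \<noteq> 0}"
  then have "\<gamma> c > 0"
    using c by (force simp: occupations_def)
  then have "\<gamma>(c := \<gamma> c - 1) \<in> occupations n (m - eps_wt c) j"
    using \<gamma> by (intro fun_upd_in_occupations[OF c]) auto
  moreover have "\<gamma> = (\<gamma>(c := \<gamma> c - 1))(c := (\<gamma>(c := \<gamma> c - 1)) c + 1)"
    by simp
  ultimately show "\<gamma> \<in> (\<lambda>\<gamma>. \<gamma>(c := \<gamma> c + 1)) ` occupations n (m - eps_wt c) j"
    by blast
qed

lemma occ_weight_add: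
  "occ_weight n (\<lambda>x. g x + h x) \<gamma> = occ_weight n g \<gamma> * qpower (\<Sum>x\<in>Bset n. h x * \<gamma> x)"
  by (simp add: occ_weight_def distrib_right qpower_add prod.distrib qpower_sum mult.assoc)

lemma occ_weight_fun_upd_incr:
  assumes "c \<in> Bset n"
  shows "occ_weight n (g(c := g c + 1)) \<gamma> = occ_weight n g \<gamma> * qpower (\<gamma> c)"
proof -
  have "g(c := g c + 1) = (\<lambda>x. g x + of_bool (x = c))"
    by auto
  moreover have "(\<Sum>x\<in>Bset n. of_bool (x = c) * \<gamma> x) = (\<Sum>x\<in>Bset n. if x = c then \<gamma> x else 0)"
    by (intro sum.cong) auto
  ultimately show ?thesis
    using assms by (simp add: occ_weight_add)
qed

lemma occ_weight_raise:
  assumes c: "c \<in> Bset n" and "\<gamma> c \<ge> 0"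
  shows "occ_weight n g (\<gamma>(c := \<gamma> c + 1)) * (1 - qpower (\<gamma> c + 1))
    = qpower (g c) * occ_weight n (g(c := g c + 1)) \<gamma>"
proof -
  obtain a where a: "\<gamma> c = int a"
    using assms(2) nonneg_eq_int by blast
  have exps: "qpower (int a) * qpower (g c * int (Suc a)) = qpower (g c) * qpower ((g c + 1) * int a)"
    by (simp add: algebra_simps flip: qpower_add)
  have "qexp_coeff (Suc a) * qpower (g c * int (Suc a)) * (1 - qpower (int (Suc a)))
      = (qexp_coeff (Suc a) * (1 - qpower (int (Suc a)))) * qpower (g c * int (Suc a))"
    by (simp only: mult_ac)
  also have "\<dots> = qexp_coeff a * (qpower (int a) * qpower (g c * int (Suc a)))"
    unfolding qexp_coeff_Suc by (simp only: mult_ac)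
  also have "\<dots> = qpower (g c) * (qexp_coeff a * qpower ((g c + 1) * int a))"
    by (simp only: exps mult_ac)
  finally show ?thesis
    using c a by (simp add: occ_weight_def prod.remove nat_add_distrib mult_ac add_ac)
qed

lemma occ_series_nth: "occ_series n g m $ j = (\<Sum>\<gamma>\<in>occupations n m j. occ_weight n g \<gamma>)"
  by (simp add: occ_series_def)

lemma occ_series_nth_Suc_step:
  assumes c: "c \<in> Bset n"
  shows "occ_series n g m $ Suc j - occ_series n (g(c := g c + 1)) m $ Suc j
    = qpower (g c) * occ_series n (g(c := g c + 1)) (m - eps_wt c) $ j"
proof -
  let ?f = "\<lambda>\<gamma>. occ_weight n g \<gamma> * (1 - qpower (\<gamma> c))"
  have "occ_series n g m $ Suc j - occ_series n (g(c := g c + 1)) m $ Suc j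
      = (\<Sum>\<gamma>\<in>occupations n m (Suc j). ?f \<gamma>)"
    unfolding occ_series_nth occ_weight_fun_upd_incr[OF c] by (simp add: sum_subtractf algebra_simps)
  also have "\<dots> = (\<Sum>\<gamma>\<in>{\<gamma> \<in> occupations n m (Suc j). \<gamma> c \<noteq> 0}. ?f \<gamma>)"
    by (rule sum.mono_neutral_right) auto
  also have "\<dots> = (\<Sum>\<gamma>\<in>occupations n (m - eps_wt c) j. ?f (\<gamma>(c := \<gamma> c + 1)))"
    unfolding occupations_raise[OF c, symmetric]
    by (rule sum.reindex_cong[OF _ refl refl]) (auto simp: inj_on_def fun_eq_iff split: if_splits)
  also have "\<dots> = (\<Sum>\<gamma>\<in>occupations n (m - eps_wt c) j. qpower (g c) * occ_weight n (g(c := g c + 1)) \<gamma>)"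
    using c by (intro sum.cong refl) (simp add: occ_weight_raise occupations_def)
  finally show ?thesis
    by (simp add: occ_series_nth sum_distrib_left)
qed

lemma occ_series_step:
  assumes c: "c \<in> Bset n"
  shows "occ_series n g m = occ_series n (g(c := g c + 1)) m
    + fps_const (qpower (g c)) * (fps_X * occ_series n (g(c := g c + 1)) (m - eps_wt c))"
proof (rule fps_ext)
  fix j
  show "occ_series n g m $ j = (occ_series n (g(c := g c + 1)) m
    + fps_const (qpower (g c)) * (fps_X * occ_series n (g(c := g c + 1)) (m - eps_wt c))) $ j"
    using occ_series_nth_Suc_step[OF c, of g m "j - 1"]
    by (cases j) (simp_all add: occ_series_nth occupations_0 occ_weight_def algebra_simps)
qed

lemma occ_series_cong:
  "(\<And>x. x \<in> Bset n \<Longrightarrow> g x = g' x) \<Longrightarrow> occ_series n g m = occ_series n g' m"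
  unfolding occ_series_def occ_weight_def by (simp cong: prod.cong)

definition pair_series :: "int \<Rightarrow> rat fls fps" where
  "pair_series e = Abs_fps (\<lambda>k. if even k then qpower (e * int (k div 2)) / qpoch (k div 2) else 0)"

lemma pair_series_step: "pair_series e = pair_series (e + 1) + fps_const (qpower e) * (fps_X * (fps_X * pair_series e))"
proof (rule fps_ext)
  fix k
  show "pair_series e $ k = (pair_series (e + 1) + fps_const (qpower e) * (fps_X * (fps_X * pair_series e))) $ k"
  proof (cases "even k \<and> k \<noteq> 0")
    case True
    then obtain t where k: "k = 2 * Suc t"
      by (metis dvd_def mult_0_right not0_implies_Suc)
    have "qpower (e * int (Suc t)) - qpower ((e + 1) * int (Suc t)) = qpower (e * int (Suc t)) * (1 - qpower (int (Suc t)))"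
      by (simp add: algebra_simps flip: qpower_add)
    moreover have "qpower (e * int (Suc t)) = qpower e * qpower (e * int t)"
      by (simp add: algebra_simps flip: qpower_add)
    ultimately show ?thesis
      using k by (simp add: pair_series_def qpoch_Suc diff_divide_distrib[symmetric] field_simps)
  next
    case False
    then show ?thesis
      by (cases k) (auto simp: pair_series_def numeral_2_eq_2, presburger)
  qed
qed

text \<open>\<^term>\<open>qscale d F\<close> is the substitution \<open>F(q\<^sup>d z)\<close>.\<close>
definition qscale :: "int \<Rightarrow> rat fls fps \<Rightarrow> rat fls fps" where
  "qscale d F = Abs_fps (\<lambda>k. qpower (d * int k) * F $ k)"

lemma qscale_mult: "qscale d (F * G) = qscale d F * qscale d G"
proof (rule fps_ext)
  fix k
  have "qscale d (F * G) $ k = (\<Sum>i=0..k. qpower (d * int k) * (F $ i * G $ (k - i)))"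
    by (simp add: qscale_def fps_mult_nth sum_distrib_left)
  also have "\<dots> = (\<Sum>i=0..k. (qpower (d * int i) * F $ i) * (qpower (d * int (k - i)) * G $ (k - i)))"
  proof (rule sum.cong[OF refl])
    fix i assume "i \<in> {0..k}"
    then have "qpower (d * int k) = qpower (d * int i) * qpower (d * int (k - i))"
      by (simp add: of_nat_diff algebra_simps flip: qpower_add)
    then show "qpower (d * int k) * (F $ i * G $ (k - i)) = qpower (d * int i) * F $ i * (qpower (d * int (k - i)) * G $ (k - i))"
      by (simp only: mult_ac)
  qed
  also have "\<dots> = (qscale d F * qscale d G) $ k"
    by (simp add: qscale_def fps_mult_nth)
  finally show "qscale d (F * G) $ k = (qscale d F * qscale d G) $ k" .
qed

lemma qscale_pair_series: "qscale d (pair_series e) = pair_series (e + 2 * d)"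
  by (rule fps_ext) (auto simp: qscale_def pair_series_def algebra_simps simp flip: qpower_add)

lemma qscale_occ_series: "qscale d (occ_series n g m) = occ_series n (\<lambda>x. g x + d) m"
proof (rule fps_ext)
  fix j
  have "occ_weight n (\<lambda>x. g x + d) \<gamma> = qpower (d * int j) * occ_weight n g \<gamma>" if "\<gamma> \<in> occupations n m j" for \<gamma>
    using that by (simp add: occ_weight_add occupations_def mult.commute flip: sum_distrib_left)
  then show "qscale d (occ_series n g m) $ j = occ_series n (\<lambda>x. g x + d) m $ j"
    by (simp add: qscale_def occ_series_nth sum_distrib_left)
qed

section \<open>The functional equation\<close>

lemma rk_le_2n: "x \<in> Bset n \<Longrightarrow> 1 \<le> rk n x \<and> rk n x \<le> 2 * n"
  by (cases x) auto

lemma H_rk: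
  assumes "n \<ge> 2" "b \<in> Bset n" "c \<in> Bset n"
  shows "H n b c = (if rk n b = n + 1 \<and> rk n c = n then 0 else if rk n b = 1 \<and> rk n c = 2 * n then -1
                    else of_bool (rk n c \<le> rk n b))"
  using assms by (cases b; cases c) (auto simp: H_def prec_def)

definition of_rank :: "nat \<Rightarrow> nat \<Rightarrow> bel" where
  "of_rank n r = (if r \<le> n then U r else Bar (2 * n + 1 - r))"

lemma of_rank_in_Bset [simp]: "1 \<le> r \<Longrightarrow> r \<le> 2 * n \<Longrightarrow> of_rank n r \<in> Bset n"
  by (auto simp: of_rank_def)

lemma rk_of_rank [simp]: "r \<le> 2 * n \<Longrightarrow> rk n (of_rank n r) = r"
  by (auto simp: of_rank_def)

lemma of_rank_rk [simp]: "x \<in> Bset n \<Longrightarrow> of_rank n (rk n x) = x"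
  by (cases x) (auto simp: of_rank_def)

lemma of_rank_eq_iff: "r \<le> 2 * n \<Longrightarrow> x \<in> Bset n \<Longrightarrow> of_rank n r = x \<longleftrightarrow> r = rk n x"
  by auto

definition pair_index :: "nat \<Rightarrow> bel \<Rightarrow> nat" where
  "pair_index n b = (case b of U _ \<Rightarrow> 1 | Bar _ \<Rightarrow> n)"

definition pair_exponent :: "nat \<Rightarrow> bel \<Rightarrow> int" where
  "pair_exponent n b = H n b (U (pair_index n b)) + H n b (Bar (pair_index n b)) - 1"

lemma pair_exponent_rk:
  assumes "n \<ge> 2" "c \<in> Bset n"
  shows "pair_exponent n c = (if rk n c = 1 then -1 else if rk n c \<le> n + 1 then 0 else 1)"
  using assms by (cases c) (auto simp: pair_exponent_def pair_index_def H_def prec_def)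

definition fermionic_series :: "nat \<Rightarrow> bel \<Rightarrow> (nat \<Rightarrow> int) \<Rightarrow> rat fls fps" where
  "fermionic_series n b m = pair_series (pair_exponent n b) * occ_series n (H n b) m"

definition transfer_term :: "nat \<Rightarrow> bel \<Rightarrow> (nat \<Rightarrow> int) \<Rightarrow> bel \<Rightarrow> rat fls fps" where
  "transfer_term n b m c =
     fps_const (qpower (H n b c)) * (fps_X * qscale (H n b c) (fermionic_series n c (m - eps_wt c)))"

lemma transfer_term_eq:
  "transfer_term n b m c = fps_const (qpower (H n b c)) * (fps_X * (pair_series (pair_exponent n c + 2 * H n b c)
     * occ_series n (\<lambda>x. H n c x + H n b c) (m - eps_wt c)))"
  by (simp add: transfer_term_def fermionic_series_def qscale_mult qscale_pair_series qscale_occ_series)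

text \<open>An intermediate stage of the functional equation: the exponents of the elements of \<open>P\<close> have
  been raised by one, and their summands of the right-hand side split off.\<close>
definition telescope :: "nat \<Rightarrow> bel \<Rightarrow> (nat \<Rightarrow> int) \<Rightarrow> int \<Rightarrow> bel set \<Rightarrow> rat fls fps" where
  "telescope n b m e P = pair_series e * occ_series n (\<lambda>x. H n b x + of_bool (x \<in> P)) m
     + (\<Sum>c\<in>P. transfer_term n b m c)"

lemma telescope_empty: "telescope n b m (pair_exponent n b) {} = fermionic_series n b m"
  by (simp add: telescope_def fermionic_series_def)

lemma telescope_Bset:
  "telescope n b m (pair_exponent n b + 2) (Bset n)
     = qscale 1 (fermionic_series n b m) + (\<Sum>c\<in>Bset n. transfer_term n b m c)"
  by (simp add: telescope_def fermionic_series_def qscale_mult qscale_pair_series qscale_occ_series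
      cong: occ_series_cong)

lemma telescope_insert:
  assumes c: "c \<in> Bset n" "c \<notin> P" and "finite P"
    and e: "pair_exponent n c + 2 * H n b c = e"
    and H: "\<And>x. x \<in> Bset n \<Longrightarrow> H n c x + H n b c = H n b x + of_bool (x \<in> insert c P)"
  shows "telescope n b m e P = telescope n b m e (insert c P)"
proof -
  let ?g = "\<lambda>x. H n b x + of_bool (x \<in> P)"
  let ?g' = "\<lambda>x. H n b x + of_bool (x \<in> insert c P)"
  have g': "?g(c := ?g c + 1) = ?g'"
    using c by auto
  have "transfer_term n b m c = fps_const (qpower (?g c)) * (fps_X * (pair_series e * occ_series n ?g' (m - eps_wt c)))"
    unfolding transfer_term_eq e using c H by (simp cong: occ_series_cong)
  then show ?thesis
    using occ_series_step[OF c(1), of ?g m] \<open>finite P\<close> c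
    unfolding telescope_def g' by (simp add: algebra_simps)
qed

text \<open>Raising \<open>c\<close> when the summand of \<open>c\<close> carries an extra exponent at its partner \<open>d\<close>: the
  surplus is one step of the pair series. Hypotheses are stated on ranks, where they become
  arithmetic.\<close>
lemma telescope_insert_pair:
  assumes c: "c \<in> Bset n" "c \<notin> P" and "finite P" and d: "d \<in> Bset n" "eps_wt c + eps_wt d = 0"
    and e: "pair_exponent n c + 2 * H n b c = e" "H n c d + 2 * H n b c = e"
    and H: "\<And>s. 1 \<le> s \<Longrightarrow> s \<le> 2 * n \<Longrightarrow> H n c (of_rank n s) + H n b c + of_bool (of_rank n s = d)
      = H n b (of_rank n s) + of_bool (of_rank n s \<in> insert c P)"
  shows "telescope n b m e P = telescope n b m (e + 1) (insert c P)"
proof -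
  let ?g = "\<lambda>x. H n b x + of_bool (x \<in> P)"
  let ?g' = "\<lambda>x. H n b x + of_bool (x \<in> insert c P)"
  let ?G = "\<lambda>x. H n c x + H n b c"
  have g': "?g(c := ?g c + 1) = ?g'"
    using c by auto
  have "(?G(d := ?G d + 1)) x = ?g' x" if "x \<in> Bset n" for x
    using H[of "rk n x"] that rk_le_2n[OF that] by (cases "x = d") simp_all
  then have G': "occ_series n (?G(d := ?G d + 1)) = occ_series n ?g'"
    by (intro ext occ_series_cong)
  have m: "m - eps_wt c - eps_wt d = m"
    using d(2) by (simp add: algebra_simps)
  have "H n b c + ?G d = e"
    using e(2) by simp
  then have q: "qpower (H n b c) * qpower (?G d) = qpower e"
    by (simp only: qpower_add[symmetric])
  let ?A = "occ_series n ?g' m" and ?B = "occ_series n ?g' (m - eps_wt c)"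
  let ?Z = "fps_const (qpower e) * (fps_X * (fps_X * pair_series e)) * ?A"
  have "transfer_term n b m c = fps_const (qpower (H n b c)) * (fps_X * (pair_series e * occ_series n ?G (m - eps_wt c)))"
    unfolding transfer_term_eq e(1) ..
  also have "\<dots> = fps_const (qpower (?g c)) * (fps_X * (pair_series e * ?B)) + ?Z"
    using c unfolding occ_series_step[OF d(1), of ?G] G' m
    by (simp add: algebra_simps flip: q fps_const_mult)
  finally have T: "transfer_term n b m c = fps_const (qpower (?g c)) * (fps_X * (pair_series e * ?B)) + ?Z" .
  have "pair_series e * ?A = (pair_series (e + 1) + fps_const (qpower e) * (fps_X * (fps_X * pair_series e))) * ?A"
    by (rule arg_cong[where f = "\<lambda>z. z * ?A", OF pair_series_step])
  then have "pair_series e * occ_series n ?g m = pair_series (e + 1) * ?A + ?Z + fps_const (qpower (?g c)) * (fps_X * (pair_series e * ?B))"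
    unfolding occ_series_step[OF c(1), of ?g m] g' by (simp add: algebra_simps)
  with \<open>finite P\<close> c show ?thesis
    unfolding telescope_def by (simp add: T add_ac)
qed

definition rank_block :: "nat \<Rightarrow> nat \<Rightarrow> nat \<Rightarrow> bel set" where
  "rank_block n lo hi = {c \<in> Bset n. lo < rk n c \<and> rk n c \<le> hi}"

lemma rank_block_empty: "hi \<le> lo \<Longrightarrow> rank_block n lo hi = {}"
  by (auto simp: rank_block_def)

lemma rank_block_Suc:
  assumes "lo < Suc h" "Suc h \<le> 2 * n"
  shows "rank_block n lo (Suc h) = insert (of_rank n (Suc h)) (rank_block n lo h)"
proof (intro equalityI subsetI)
  fix x assume "x \<in> rank_block n lo (Suc h)"
  then show "x \<in> insert (of_rank n (Suc h)) (rank_block n lo h)"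
    using of_rank_rk[of x n] by (cases "rk n x = Suc h") (auto simp: rank_block_def)
qed (use assms in \<open>auto simp: rank_block_def\<close>)

lemma telescope_rank_block_Suc:
  assumes "finite P" "P \<inter> rank_block n lo (Suc h) = {}" "lo < Suc h" "Suc h \<le> 2 * n"
    and e: "pair_exponent n (of_rank n (Suc h)) + 2 * H n b (of_rank n (Suc h)) = e"
    and H: "\<And>s. 1 \<le> s \<Longrightarrow> s \<le> 2 * n \<Longrightarrow> H n (of_rank n (Suc h)) (of_rank n s) + H n b (of_rank n (Suc h))
      = H n b (of_rank n s) + of_bool (of_rank n s \<in> P \<union> rank_block n lo (Suc h))"
  shows "telescope n b m e (P \<union> rank_block n lo h) = telescope n b m e (P \<union> rank_block n lo (Suc h))"
proof -
  let ?c = "of_rank n (Suc h)"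
  have block: "rank_block n lo (Suc h) = insert ?c (rank_block n lo h)"
    using assms(3,4) by (rule rank_block_Suc)
  have "telescope n b m e (P \<union> rank_block n lo h) = telescope n b m e (insert ?c (P \<union> rank_block n lo h))"
  proof (rule telescope_insert)
    show "?c \<in> Bset n" "?c \<notin> P \<union> rank_block n lo h"
      using assms(2-4) by (auto simp: rank_block_def)
    show "H n ?c x + H n b ?c = H n b x + of_bool (x \<in> insert ?c (P \<union> rank_block n lo h))"
      if "x \<in> Bset n" for x
      using H[of "rk n x"] rk_le_2n[OF that] that block by simp
    show "finite (P \<union> rank_block n lo h)"
      using \<open>finite P\<close> by (simp add: rank_block_def)
  qed (rule e)
  with block show ?thesis
    by simp
qed

lemma telescope_rank_block:
  assumes "finite P" "P \<inter> rank_block n lo hi = {}" "hi \<le> 2 * n"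
    and e: "\<And>r. lo < r \<Longrightarrow> r \<le> hi \<Longrightarrow> pair_exponent n (of_rank n r) + 2 * H n b (of_rank n r) = e"
    and H: "\<And>r s. lo < r \<Longrightarrow> r \<le> hi \<Longrightarrow> 1 \<le> s \<Longrightarrow> s \<le> 2 * n
      \<Longrightarrow> H n (of_rank n r) (of_rank n s) + H n b (of_rank n r)
        = H n b (of_rank n s) + of_bool (of_rank n s \<in> P \<union> rank_block n lo r)"
  shows "telescope n b m e P = telescope n b m e (P \<union> rank_block n lo hi)"
proof -
  have "telescope n b m e P = telescope n b m e (P \<union> rank_block n lo h)" if "h \<le> hi" for h
    using that
  proof (induction h)
    case 0
    then show ?case
      by (simp add: rank_block_empty)
  next
    case (Suc h)
    show ?case
    proof (cases "lo < Suc h")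
      case True
      have "P \<inter> rank_block n lo (Suc h) = {}"
        using assms(2) Suc.prems by (auto simp: rank_block_def)
      with Suc True assms(1,3) e H show ?thesis
        by (simp add: telescope_rank_block_Suc)
    next
      case False
      with Suc show ?thesis
        by (simp add: rank_block_empty)
    qed
  qed
  then show ?thesis
    by simp
qed

lemma Bset_eqI_of_rank:
  assumes "A \<subseteq> Bset n" and "\<And>r. 1 \<le> r \<Longrightarrow> r \<le> 2 * n \<Longrightarrow> of_rank n r \<in> A"
  shows "A = Bset n"
  using assms of_rank_rk rk_le_2n by (metis subsetI subset_antisym)

lemmas rank_simps = rank_block_def H_rk pair_exponent_rk of_rank_eq_iff

lemma fermionic_series_functional_eq_U:
  assumes n: "n \<ge> 2" and k: "2 \<le> k" "k \<le> n"
  shows "fermionic_series n (U k) m = qscale 1 (fermionic_series n (U k) m) + (\<Sum>c\<in>Bset n. transfer_term n (U k) m c)"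
proof -
  let ?T = "telescope n (U k) m" and ?e = "pair_exponent n (U k)"
  let ?P1 = "{} \<union> rank_block n k n"
  let ?P2 = "insert (Bar n) ?P1"
  let ?P3 = "?P2 \<union> rank_block n (n + 1) (2 * n)"
  let ?P4 = "insert (U 1) ?P3"
  have "fermionic_series n (U k) m = ?T ?e {}"
    by (simp add: telescope_empty)
  also have "\<dots> = ?T ?e ?P1"
    by (rule telescope_rank_block) (use assms in \<open>auto simp: rank_simps\<close>)
  also have "\<dots> = ?T (?e + 1) ?P2"
    by (rule telescope_insert_pair[where d = "U n"]) (use assms in \<open>auto simp: rank_simps\<close>)
  also have "\<dots> = ?T (?e + 1) ?P3"
    by (rule telescope_rank_block) (use assms in \<open>auto simp: rank_simps\<close>)
  also have "\<dots> = ?T (?e + 1 + 1) ?P4"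
    by (rule telescope_insert_pair[where d = "Bar 1"]) (use assms in \<open>auto simp: rank_simps\<close>)
  also have "\<dots> = ?T (?e + 1 + 1) (?P4 \<union> rank_block n 1 k)"
    by (rule telescope_rank_block) (use assms in \<open>auto simp: rank_simps\<close>)
  also have "?P4 \<union> rank_block n 1 k = Bset n"
    by (rule Bset_eqI_of_rank) (use assms in \<open>auto simp: rank_simps\<close>)
  also have "?T (?e + 1 + 1) (Bset n) = qscale 1 (fermionic_series n (U k) m) + (\<Sum>c\<in>Bset n. transfer_term n (U k) m c)"
    unfolding add.assoc one_add_one by (rule telescope_Bset)
  finally show ?thesis .
qed

text \<open>Unlike the other cases, the order does not start right after \<open>b\<close>: \<open>Bar 1\<close>, where
  \<open>H n (U 1)\<close> takes the exceptional value \<open>-1\<close>, comes first.\<close>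
lemma fermionic_series_functional_eq_U1:
  assumes n: "n \<ge> 2"
  shows "fermionic_series n (U 1) m = qscale 1 (fermionic_series n (U 1) m) + (\<Sum>c\<in>Bset n. transfer_term n (U 1) m c)"
proof -
  let ?T = "telescope n (U 1) m" and ?e = "pair_exponent n (U 1)"
  let ?P1 = "insert (Bar 1) {}"
  let ?P2 = "?P1 \<union> rank_block n 1 n"
  let ?P3 = "insert (Bar n) ?P2"
  let ?P4 = "?P3 \<union> rank_block n (n + 1) (2 * n - 1)"
  have "fermionic_series n (U 1) m = ?T ?e {}"
    by (simp add: telescope_empty)
  also have "\<dots> = ?T (?e + 1) ?P1"
    by (rule telescope_insert_pair[where d = "U 1"]) (use assms in \<open>auto simp: rank_simps\<close>)
  also have "\<dots> = ?T (?e + 1) ?P2"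
    by (rule telescope_rank_block) (use assms in \<open>auto simp: rank_simps\<close>)
  also have "\<dots> = ?T (?e + 1 + 1) ?P3"
    by (rule telescope_insert_pair[where d = "U n"]) (use assms in \<open>auto simp: rank_simps\<close>)
  also have "\<dots> = ?T (?e + 1 + 1) ?P4"
    by (rule telescope_rank_block) (use assms in \<open>auto simp: rank_simps\<close>)
  also have "\<dots> = ?T (?e + 1 + 1) (?P4 \<union> rank_block n 0 1)"
    by (rule telescope_rank_block) (use assms in \<open>auto simp: rank_simps\<close>)
  also have "?P4 \<union> rank_block n 0 1 = Bset n"
    by (rule Bset_eqI_of_rank) (use assms in \<open>auto simp: rank_simps\<close>)
  also have "?T (?e + 1 + 1) (Bset n) = qscale 1 (fermionic_series n (U 1) m) + (\<Sum>c\<in>Bset n. transfer_term n (U 1) m c)"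
    unfolding add.assoc one_add_one by (rule telescope_Bset)
  finally show ?thesis .
qed

lemma fermionic_series_functional_eq_Bar:
  assumes n: "n \<ge> 2" and k: "1 \<le> k" "k < n"
  shows "fermionic_series n (Bar k) m = qscale 1 (fermionic_series n (Bar k) m) + (\<Sum>c\<in>Bset n. transfer_term n (Bar k) m c)"
proof -
  let ?T = "telescope n (Bar k) m" and ?e = "pair_exponent n (Bar k)" and ?\<rho> = "2 * n + 1 - k"
  let ?P1 = "{} \<union> rank_block n ?\<rho> (2 * n)"
  let ?P2 = "insert (U 1) ?P1"
  let ?P3 = "?P2 \<union> rank_block n 1 n"
  let ?P4 = "insert (Bar n) ?P3"
  have "fermionic_series n (Bar k) m = ?T ?e {}"
    by (simp add: telescope_empty)
  also have "\<dots> = ?T ?e ?P1"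
    by (rule telescope_rank_block) (use assms in \<open>auto simp: rank_simps\<close>)
  also have "\<dots> = ?T (?e + 1) ?P2"
    by (rule telescope_insert_pair[where d = "Bar 1"]) (use assms in \<open>auto simp: rank_simps\<close>)
  also have "\<dots> = ?T (?e + 1) ?P3"
    by (rule telescope_rank_block) (use assms in \<open>auto simp: rank_simps\<close>)
  also have "\<dots> = ?T (?e + 1 + 1) ?P4"
    by (rule telescope_insert_pair[where d = "U n"]) (use assms in \<open>auto simp: rank_simps\<close>)
  also have "\<dots> = ?T (?e + 1 + 1) (?P4 \<union> rank_block n (n + 1) ?\<rho>)"
    by (rule telescope_rank_block) (use assms in \<open>auto simp: rank_simps\<close>)
  also have "?P4 \<union> rank_block n (n + 1) ?\<rho> = Bset n"
    by (rule Bset_eqI_of_rank) (use assms in \<open>auto simp: rank_simps\<close>)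
  also have "?T (?e + 1 + 1) (Bset n) = qscale 1 (fermionic_series n (Bar k) m) + (\<Sum>c\<in>Bset n. transfer_term n (Bar k) m c)"
    unfolding add.assoc one_add_one by (rule telescope_Bset)
  finally show ?thesis .
qed

lemma fermionic_series_functional_eq_Barn:
  assumes n: "n \<ge> 2"
  shows "fermionic_series n (Bar n) m = qscale 1 (fermionic_series n (Bar n) m) + (\<Sum>c\<in>Bset n. transfer_term n (Bar n) m c)"
proof -
  let ?T = "telescope n (Bar n) m" and ?e = "pair_exponent n (Bar n)"
  let ?P1 = "insert (U n) {}"
  let ?P2 = "?P1 \<union> rank_block n (n + 1) (2 * n)"
  let ?P3 = "insert (U 1) ?P2"
  let ?P4 = "?P3 \<union> rank_block n 1 (n - 1)"
  have "fermionic_series n (Bar n) m = ?T ?e {}"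
    by (simp add: telescope_empty)
  also have "\<dots> = ?T (?e + 1) ?P1"
    by (rule telescope_insert_pair[where d = "Bar n"]) (use assms in \<open>auto simp: rank_simps\<close>)
  also have "\<dots> = ?T (?e + 1) ?P2"
    by (rule telescope_rank_block) (use assms in \<open>auto simp: rank_simps\<close>)
  also have "\<dots> = ?T (?e + 1 + 1) ?P3"
    by (rule telescope_insert_pair[where d = "Bar 1"]) (use assms in \<open>auto simp: rank_simps\<close>)
  also have "\<dots> = ?T (?e + 1 + 1) ?P4"
    by (rule telescope_rank_block) (use assms in \<open>auto simp: rank_simps\<close>)
  also have "\<dots> = ?T (?e + 1 + 1) (?P4 \<union> rank_block n n (n + 1))"
    by (rule telescope_rank_block) (use assms in \<open>auto simp: rank_simps\<close>)
  also have "?P4 \<union> rank_block n n (n + 1) = Bset n"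
    by (rule Bset_eqI_of_rank) (use assms in \<open>auto simp: rank_simps\<close>)
  also have "?T (?e + 1 + 1) (Bset n) = qscale 1 (fermionic_series n (Bar n) m) + (\<Sum>c\<in>Bset n. transfer_term n (Bar n) m c)"
    unfolding add.assoc one_add_one by (rule telescope_Bset)
  finally show ?thesis .
qed

lemma fermionic_series_functional_eq:
  assumes "n \<ge> 2" "b \<in> Bset n"
  shows "fermionic_series n b m = qscale 1 (fermionic_series n b m) + (\<Sum>c\<in>Bset n. transfer_term n b m c)"
proof (cases b)
  case (U k)
  with assms show ?thesis
    using fermionic_series_functional_eq_U1 fermionic_series_functional_eq_U[of n k]
    by (cases "k = 1") auto
next
  case (Bar k)
  with assms show ?thesis
    using fermionic_series_functional_eq_Barn fermionic_series_functional_eq_Bar[of n k]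
    by (cases "k = n") auto
qed

lemma transfer_term_nth_Suc:
  "transfer_term n b m c $ Suc j = qpower (H n b c * int (Suc j)) * fermionic_series n c (m - eps_wt c) $ j"
  by (simp add: transfer_term_def qscale_def algebra_simps flip: qpower_add)

lemma fermionic_series_nth_Suc:
  assumes "n \<ge> 2" "b \<in> Bset n"
  shows "(1 - qpower (int (Suc j))) * fermionic_series n b m $ Suc j
    = (\<Sum>c\<in>Bset n. qpower (H n b c * int (Suc j)) * fermionic_series n c (m - eps_wt c) $ j)"
proof -
  have "fermionic_series n b m $ Suc j
      = qpower (int (Suc j)) * fermionic_series n b m $ Suc j + (\<Sum>c\<in>Bset n. transfer_term n b m c $ Suc j)"
    by (subst fermionic_series_functional_eq[OF assms]) (simp add: qscale_def fps_sum_nth)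
  then show ?thesis
    by (simp add: transfer_term_nth_Suc algebra_simps)
qed

lemma fermionic_series_nth_0: "fermionic_series n b m $ 0 = of_bool (\<forall>i\<in>{1..n}. m i = 0)"
  by (simp add: fermionic_series_def pair_series_def occ_series_nth occupations_0 occ_weight_def)

section \<open>Paths\<close>

definition paths :: "nat \<Rightarrow> nat \<Rightarrow> (nat \<Rightarrow> int) \<Rightarrow> bel list set" where
  "paths n j \<mu> = {xs. length xs = j \<and> set xs \<subseteq> Bset n \<and> (\<Sum>x\<leftarrow>xs. wt n x) = \<mu>}"

definition path_energy :: "nat \<Rightarrow> bel \<Rightarrow> bel list \<Rightarrow> int" where
  "path_energy n b xs = (\<Sum>i = 1..length xs. int i * H n (pathel b xs (i + 1)) (pathel b xs i))"

lemma gfun_eq: "gfun n j b \<mu> = (\<Sum>xs\<in>paths n j \<mu>. qpower (path_energy n b xs))"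
  by (simp add: gfun_def paths_def path_energy_def qpower_def)

lemma finite_paths: "finite (paths n j \<mu>)"
proof (rule finite_subset)
  show "paths n j \<mu> \<subseteq> {xs. set xs \<subseteq> Bset n \<and> length xs = j}"
    by (auto simp: paths_def)
qed (simp add: finite_lists_length_eq)

lemma path_energy_snoc: "path_energy n b (ys @ [c]) = int (Suc (length ys)) * H n b c + path_energy n c ys"
proof -
  have "pathel b (ys @ [c]) i = pathel c ys i" if "i \<le> Suc (length ys)" "i \<noteq> 0" for i
    using that by (auto simp: pathel_def nth_append)
  then have "(\<Sum>i = 1..length ys. int i * H n (pathel b (ys @ [c]) (i + 1)) (pathel b (ys @ [c]) i))
      = (\<Sum>i = 1..length ys. int i * H n (pathel c ys (i + 1)) (pathel c ys i))"
    by (intro sum.cong) auto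
  moreover have "pathel b (ys @ [c]) (Suc (length ys) + 1) = b" "pathel b (ys @ [c]) (Suc (length ys)) = c"
    by (simp_all add: pathel_def nth_append)
  ultimately show ?thesis
    by (simp add: path_energy_def)
qed

lemma paths_Suc_bij:
  "bij_betw (\<lambda>(c, ys). ys @ [c]) (SIGMA c:Bset n. paths n j (\<mu> - wt n c)) (paths n (Suc j) \<mu>)"
proof (rule bij_betw_byWitness[where f' = "\<lambda>xs. (last xs, butlast xs)"])
  show "(\<lambda>xs. (last xs, butlast xs)) ` paths n (Suc j) \<mu> \<subseteq> (SIGMA c:Bset n. paths n j (\<mu> - wt n c))"
  proof
    fix p assume "p \<in> (\<lambda>xs. (last xs, butlast xs)) ` paths n (Suc j) \<mu>"
    then obtain xs where xs: "xs \<in> paths n (Suc j) \<mu>" and p: "p = (last xs, butlast xs)"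
      by auto
    moreover obtain ys c where "xs = ys @ [c]"
      using xs by (cases xs rule: rev_cases) (auto simp: paths_def)
    ultimately show "p \<in> (SIGMA c:Bset n. paths n j (\<mu> - wt n c))"
      by (auto simp: paths_def algebra_simps)
  qed
next
  show "\<forall>xs\<in>paths n (Suc j) \<mu>. (\<lambda>(c, ys). ys @ [c]) (last xs, butlast xs) = xs"
    by (auto simp: paths_def intro!: append_butlast_last_id)
qed (auto simp: paths_def)

lemma gfun_Suc:
  "gfun n (Suc j) b \<mu> = (\<Sum>c\<in>Bset n. qpower (int (Suc j) * H n b c) * gfun n j c (\<mu> - wt n c))"
proof -
  have "gfun n (Suc j) b \<mu> = (\<Sum>(c, ys)\<in>(SIGMA c:Bset n. paths n j (\<mu> - wt n c)). qpower (path_energy n b (ys @ [c])))"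
    unfolding gfun_eq sum.reindex_bij_betw[OF paths_Suc_bij, symmetric] by (simp add: case_prod_beta)
  also have "\<dots> = (\<Sum>c\<in>Bset n. \<Sum>ys\<in>paths n j (\<mu> - wt n c). qpower (path_energy n b (ys @ [c])))"
    by (rule sum.Sigma[symmetric]) (auto simp: finite_paths)
  also have "\<dots> = (\<Sum>c\<in>Bset n. \<Sum>ys\<in>paths n j (\<mu> - wt n c).
      qpower (int (Suc j) * H n b c) * qpower (path_energy n c ys))"
    by (intro sum.cong refl) (simp add: paths_def path_energy_snoc qpower_add)
  finally show ?thesis
    by (simp add: gfun_eq sum_distrib_left)
qed

lemma gfun_0: "gfun n 0 b \<mu> = of_bool (\<mu> = 0)"
proof -
  have "paths n 0 \<mu> = (if \<mu> = 0 then {[]} else {})"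
    by (auto simp: paths_def)
  then show ?thesis
    by (simp add: gfun_eq path_energy_def)
qed

lemma muwt_diff_wt_U:
  assumes "n \<ge> 4" "1 \<le> i" "i \<le> n"
  shows "muwt n m - wt n (U i) = muwt n (m - eps_wt (U i))"
  using assms by (auto simp: muwt_def wtU_def Lam_def fun_eq_iff)

lemma muwt_diff_wt:
  assumes "n \<ge> 4" "c \<in> Bset n"
  shows "muwt n m - wt n c = muwt n (m - eps_wt c)"
proof (cases c)
  case (U i)
  with assms muwt_diff_wt_U[of n i m] show ?thesis
    by simp
next
  case (Bar i)
  have "eps_wt (Bar i) = - eps_wt (U i)"
    by auto
  with muwt_diff_wt_U[of n i "m + eps_wt (U i)"] assms Bar show ?thesis
    by (simp add: algebra_simps)
qed

lemma muwt_eq_0_iff: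
  assumes "n \<ge> 2"
  shows "muwt n m = 0 \<longleftrightarrow> (\<forall>i\<in>{1..n}. m i = 0)"
proof
  assume "muwt n m = 0"
  then have z: "muwt n m k = 0" for k
    by simp
  have m1: "m 1 = 0"
    using z[of 0] z[of 1] assms by (simp add: muwt_def numeral_2_eq_2)
  have "m k = 0" if "1 \<le> k" "k \<le> n" for k
    using that
  proof (induction k rule: dec_induct)
    case base
    show ?case by (rule m1)
  next
    case (step k)
    then show ?case
      using z[of k] by (simp add: muwt_def)
  qed
  then show "\<forall>i\<in>{1..n}. m i = 0"
    by simp
next
  assume "\<forall>i\<in>{1..n}. m i = 0"
  then have "m i = 0" if "1 \<le> i" "i \<le> n" for i
    using that by simp
  with assms show "muwt n m = 0"
    by (simp add: muwt_def fun_eq_iff)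
qed

section \<open>The fermionic formula\<close>

lemma occ_weight_eq:
  assumes "\<forall>x\<in>Bset n. \<gamma> x \<ge> 0"
  shows "occ_weight n f \<gamma> = qpower ((\<Sum>x\<in>Bset n. \<gamma> x * (\<gamma> x - 1)) div 2 + (\<Sum>x\<in>Bset n. f x * \<gamma> x))
    / (\<Prod>x\<in>Bset n. qpoch (nat (\<gamma> x)))"
proof -
  have "(\<Sum>x\<in>Bset n. \<gamma> x * (\<gamma> x - 1)) = 2 * (\<Sum>x\<in>Bset n. \<gamma> x * (\<gamma> x - 1) div 2)"
    by (simp add: sum_distrib_left)
  then have "(\<Sum>x\<in>Bset n. \<gamma> x * (\<gamma> x - 1)) div 2 = (\<Sum>x\<in>Bset n. \<gamma> x * (\<gamma> x - 1) div 2)"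
    by simp
  with assms show ?thesis
    by (simp add: occ_weight_def qexp_coeff_def prod_dividef prod.distrib qpower_sum qpower_add)
qed

lemma fermionic_summand_eq:
  assumes "\<gamma> \<in> occupations n m j"
  shows "qpow ((\<Sum>x\<in>Bset n. \<gamma> x * (\<gamma> x - 1)) div 2 - \<gamma> (U s) * \<gamma> (Bar s) + (\<Sum>x\<in>Bset n. f x * \<gamma> x))
      * qmultinom n j \<gamma>
    = qpoch j * (qpower (- (\<gamma> (U s) * \<gamma> (Bar s))) * occ_weight n f \<gamma>)"
  unfolding qpower_def[symmetric]
  using assms by (simp add: occupations_def occ_weight_eq qmultinom_def algebra_simps flip: qpower_add)


definition pair_shift :: "nat \<Rightarrow> int \<Rightarrow> (bel \<Rightarrow> int) \<Rightarrow> bel \<Rightarrow> int" where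
  "pair_shift s d \<gamma> = \<gamma>(U s := \<gamma> (U s) + d, Bar s := \<gamma> (Bar s) + d)"

lemma occ_weight_split_pair:
  assumes "1 \<le> s" "s \<le> n"
  shows "occ_weight n f \<gamma> = qexp_coeff (nat (\<gamma> (U s))) * qpower (f (U s) * \<gamma> (U s))
    * (qexp_coeff (nat (\<gamma> (Bar s))) * qpower (f (Bar s) * \<gamma> (Bar s)))
    * (\<Prod>x\<in>Bset n - {U s, Bar s}. qexp_coeff (nat (\<gamma> x)) * qpower (f x * \<gamma> x))"
proof -
  let ?w = "\<lambda>x. qexp_coeff (nat (\<gamma> x)) * qpower (f x * \<gamma> x)"
  have "Bset n - {U s} - {Bar s} = Bset n - {U s, Bar s}"
    by auto
  then show ?thesis
    using assms prod.remove[of "Bset n" "U s" ?w] prod.remove[of "Bset n - {U s}" "Bar s" ?w]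
    by (simp add: occ_weight_def mult.assoc)
qed

lemma occ_weight_lower_pair:
  assumes s: "1 \<le> s" "s \<le> n" and a: "\<gamma> (U s) = int a" "\<gamma> (Bar s) = int a'"
  shows "qpower (- (\<gamma> (U s) * \<gamma> (Bar s))) * occ_weight n f \<gamma>
    = (\<Sum>t\<le>min a a'. qpower ((f (U s) + f (Bar s) - 1) * int t) / qpoch t * occ_weight n f (pair_shift s (- int t) \<gamma>))"
proof -
  let ?R = "\<Prod>x\<in>Bset n - {U s, Bar s}. qexp_coeff (nat (\<gamma> x)) * qpower (f x * \<gamma> x)"
  have R: "(\<Prod>x\<in>Bset n - {U s, Bar s}. qexp_coeff (nat (pair_shift s d \<gamma> x)) * qpower (f x * pair_shift s d \<gamma> x)) = ?R" for d
    by (intro prod.cong) (auto simp: pair_shift_def)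
  have "qpower (- (\<gamma> (U s) * \<gamma> (Bar s))) * occ_weight n f \<gamma>
      = pair_conv a a' * qpower (f (U s) * int a + f (Bar s) * int a') * ?R"
    unfolding occ_weight_split_pair[OF s] pair_conv_eq a by (simp add: qpower_add mult_ac)
  also have "\<dots> = (\<Sum>t\<le>min a a'. qpower ((f (U s) + f (Bar s) - 1) * int t) / qpoch t
      * (qexp_coeff (a - t) * qpower (f (U s) * int (a - t)) * (qexp_coeff (a' - t) * qpower (f (Bar s) * int (a' - t))) * ?R))"
    unfolding pair_conv_def sum_distrib_right
  proof (rule sum.cong[OF refl])
    fix t assume "t \<in> {..min a a'}"
    then have "qpower (- int t) * qpower (f (U s) * int a + f (Bar s) * int a')
        = qpower ((f (U s) + f (Bar s) - 1) * int t) * (qpower (f (U s) * int (a - t)) * qpower (f (Bar s) * int (a' - t)))"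
      by (simp add: of_nat_diff algebra_simps flip: qpower_add)
    then show "qpower (- int t) / qpoch t * qexp_coeff (a - t) * qexp_coeff (a' - t) * qpower (f (U s) * int a + f (Bar s) * int a') * ?R
      = qpower ((f (U s) + f (Bar s) - 1) * int t) / qpoch t
      * (qexp_coeff (a - t) * qpower (f (U s) * int (a - t)) * (qexp_coeff (a' - t) * qpower (f (Bar s) * int (a' - t))) * ?R)"
      by (simp add: field_simps)
  qed
  also have "\<dots> = (\<Sum>t\<le>min a a'. qpower ((f (U s) + f (Bar s) - 1) * int t) / qpoch t * occ_weight n f (pair_shift s (- int t) \<gamma>))"
    using s by (intro sum.cong refl) (simp add: occ_weight_split_pair R, simp add: pair_shift_def a nat_diff_distrib of_nat_diff)
  finally show ?thesis .
qed


lemma pair_shift_in_occupations: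
  assumes s: "1 \<le> s" "s \<le> n" and \<gamma>: "\<gamma> \<in> occupations n m j"
    and "\<gamma> (U s) + d \<ge> 0" "\<gamma> (Bar s) + d \<ge> 0" "int j' = int j + 2 * d"
  shows "pair_shift s d \<gamma> \<in> occupations n m j'"
proof -
  have "int j + d \<ge> 0"
    using occupations_le[OF \<gamma>, of "U s"] assms by simp
  have U: "\<gamma>(U s := \<gamma> (U s) + d) \<in> occupations n (m + (\<lambda>i. d * eps_wt (U s) i)) (nat (int j + d))"
    using assms \<open>int j + d \<ge> 0\<close> by (intro fun_upd_in_occupations) auto
  have "(\<gamma>(U s := \<gamma> (U s) + d))(Bar s := \<gamma> (Bar s) + d)
      \<in> occupations n (m + (\<lambda>i. d * eps_wt (U s) i) + (\<lambda>i. d * eps_wt (Bar s) i)) j'"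
    using assms \<open>int j + d \<ge> 0\<close> by (intro fun_upd_in_occupations[OF _ U]) auto
  moreover have "m + (\<lambda>i. d * eps_wt (U s) i) + (\<lambda>i. d * eps_wt (Bar s) i) = m"
    by auto
  ultimately show ?thesis
    unfolding pair_shift_def by (simp only:)
qed

lemma pair_shift_image_occupations:
  assumes s: "1 \<le> s" "s \<le> n" and "2 * t \<le> j"
  shows "pair_shift s (int t) ` occupations n m (j - 2 * t)
    = {\<gamma> \<in> occupations n m j. int t \<le> \<gamma> (U s) \<and> int t \<le> \<gamma> (Bar s)}"
proof (intro equalityI subsetI)
  fix \<gamma> assume "\<gamma> \<in> pair_shift s (int t) ` occupations n m (j - 2 * t)"
  then obtain \<delta> where \<delta>: "\<delta> \<in> occupations n m (j - 2 * t)" and "\<gamma> = pair_shift s (int t) \<delta>"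
    by auto
  moreover have "\<delta> (U s) \<ge> 0" "\<delta> (Bar s) \<ge> 0"
    using \<delta> s by (auto simp: occupations_def)
  ultimately show "\<gamma> \<in> {\<gamma> \<in> occupations n m j. int t \<le> \<gamma> (U s) \<and> int t \<le> \<gamma> (Bar s)}"
    using assms by (auto simp: pair_shift_def intro!: pair_shift_in_occupations[OF s, unfolded pair_shift_def])
next
  fix \<gamma> assume \<gamma>: "\<gamma> \<in> {\<gamma> \<in> occupations n m j. int t \<le> \<gamma> (U s) \<and> int t \<le> \<gamma> (Bar s)}"
  then have "pair_shift s (- int t) \<gamma> \<in> occupations n m (j - 2 * t)"
    using assms by (intro pair_shift_in_occupations) auto
  moreover have "\<gamma> = pair_shift s (int t) (pair_shift s (- int t) \<gamma>)"
    by (auto simp: pair_shift_def)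
  ultimately show "\<gamma> \<in> pair_shift s (int t) ` occupations n m (j - 2 * t)"
    by blast
qed


lemma occupations_pair_le:
  assumes "\<gamma> \<in> occupations n m j" "1 \<le> s" "s \<le> n"
  shows "\<gamma> (U s) + \<gamma> (Bar s) \<le> int j"
proof -
  have "\<gamma> (U s) + \<gamma> (Bar s) = (\<Sum>x\<in>{U s, Bar s}. \<gamma> x)"
    by simp
  also have "\<dots> \<le> (\<Sum>x\<in>Bset n. \<gamma> x)"
    using assms by (intro sum_mono2) (auto simp: occupations_def)
  finally show ?thesis
    using assms(1) by (simp add: occupations_def)
qed

lemma sum_occupations_lower_pair:
  assumes s: "1 \<le> s" "s \<le> n"
  shows "(\<Sum>\<gamma>\<in>occupations n m j. \<Sum>t\<le>min (nat (\<gamma> (U s))) (nat (\<gamma> (Bar s))).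
      c t * occ_weight n f (pair_shift s (- int t) \<gamma>))
    = (\<Sum>t\<le>j div 2. c t * occ_series n f m $ (j - 2 * t))"
proof -
  let ?F = "\<lambda>\<gamma> t. c t * occ_weight n f (pair_shift s (- int t) \<gamma>)"
  let ?P = "\<lambda>\<gamma> t. int t \<le> \<gamma> (U s) \<and> int t \<le> \<gamma> (Bar s)"
  have "(\<Sum>t\<le>min (nat (\<gamma> (U s))) (nat (\<gamma> (Bar s))). ?F \<gamma> t) = (\<Sum>t\<le>j div 2. if ?P \<gamma> t then ?F \<gamma> t else 0)"
    if "\<gamma> \<in> occupations n m j" for \<gamma>
  proof -
    have "\<gamma> (U s) \<ge> 0" "\<gamma> (Bar s) \<ge> 0"
      using that s by (auto simp: occupations_def)
    with occupations_pair_le[OF that s] have "{..min (nat (\<gamma> (U s))) (nat (\<gamma> (Bar s)))} = {t \<in> {..j div 2}. ?P \<gamma> t}"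
      using that by (auto simp: occupations_def le_nat_iff)
    then show ?thesis
      by (simp only: sum.inter_filter[symmetric] finite_atMost)
  qed
  then have "(\<Sum>\<gamma>\<in>occupations n m j. \<Sum>t\<le>min (nat (\<gamma> (U s))) (nat (\<gamma> (Bar s))). ?F \<gamma> t)
      = (\<Sum>t\<le>j div 2. \<Sum>\<gamma>\<in>occupations n m j. if ?P \<gamma> t then ?F \<gamma> t else 0)"
    by (subst sum.swap) (rule sum.cong[OF refl])
  also have "\<dots> = (\<Sum>t\<le>j div 2. \<Sum>\<gamma>\<in>{\<gamma> \<in> occupations n m j. ?P \<gamma> t}. ?F \<gamma> t)"
    by (simp only: sum.inter_filter[symmetric] finite_occupations)
  also have "\<dots> = (\<Sum>t\<le>j div 2. \<Sum>\<gamma>\<in>occupations n m (j - 2 * t). ?F (pair_shift s (int t) \<gamma>) t)"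
  proof (rule sum.cong[OF refl])
    fix t assume "t \<in> {..j div 2}"
    then have "2 * t \<le> j"
      by simp
    show "(\<Sum>\<gamma>\<in>{\<gamma> \<in> occupations n m j. ?P \<gamma> t}. ?F \<gamma> t)
      = (\<Sum>\<gamma>\<in>occupations n m (j - 2 * t). ?F (pair_shift s (int t) \<gamma>) t)"
      unfolding pair_shift_image_occupations[OF s \<open>2 * t \<le> j\<close>, symmetric]
      by (rule sum.reindex_cong[OF _ refl refl]) (auto simp: inj_on_def pair_shift_def fun_eq_iff split: if_splits)
  qed
  also have "\<dots> = (\<Sum>t\<le>j div 2. c t * occ_series n f m $ (j - 2 * t))"
    by (simp add: occ_series_nth sum_distrib_left pair_shift_def)
  finally show ?thesis .
qed

lemma pair_series_mult_nth:
  "(pair_series e * F) $ j = (\<Sum>t\<le>j div 2. qpower (e * int t) / qpoch t * F $ (j - 2 * t))"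
proof -
  let ?a = "\<lambda>i. qpower (e * int (i div 2)) / qpoch (i div 2) * F $ (j - i)"
  have "(pair_series e * F) $ j = (\<Sum>i = 0..j. if even i then ?a i else 0)"
    by (auto simp: fps_mult_nth pair_series_def intro!: sum.cong)
  also have "\<dots> = sum ?a {i \<in> {0..j}. even i}"
    by (simp only: sum.inter_filter[symmetric] finite_atLeastAtMost)
  also have "{i \<in> {0..j}. even i} = (\<lambda>t. 2 * t) ` {..j div 2}"
    by (auto elim!: evenE)
  finally show ?thesis
    by (simp add: sum.reindex inj_on_def)
qed

lemma fermionic_sum_eq_nth:
  assumes s: "1 \<le> s" "s \<le> n"
  shows "(\<Sum>\<gamma>\<in>occupations n m j. qpow ((\<Sum>x\<in>Bset n. \<gamma> x * (\<gamma> x - 1)) div 2 - \<gamma> (U s) * \<gamma> (Bar s)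
      + (\<Sum>x\<in>Bset n. f x * \<gamma> x)) * qmultinom n j \<gamma>)
    = qpoch j * (pair_series (f (U s) + f (Bar s) - 1) * occ_series n f m) $ j"
    (is "?lhs = _")
proof -
  let ?c = "\<lambda>t. qpower ((f (U s) + f (Bar s) - 1) * int t) / qpoch t"
  have "?lhs = qpoch j * (\<Sum>\<gamma>\<in>occupations n m j. qpower (- (\<gamma> (U s) * \<gamma> (Bar s))) * occ_weight n f \<gamma>)"
    unfolding sum_distrib_left by (rule sum.cong[OF refl], rule fermionic_summand_eq)
  also have "\<dots> = qpoch j * (\<Sum>\<gamma>\<in>occupations n m j. \<Sum>t\<le>min (nat (\<gamma> (U s))) (nat (\<gamma> (Bar s))).
      ?c t * occ_weight n f (pair_shift s (- int t) \<gamma>))"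
    using s by (intro arg_cong2[where f = "(*)"] sum.cong refl occ_weight_lower_pair) (auto simp: occupations_def)
  also have "\<dots> = qpoch j * (pair_series (f (U s) + f (Bar s) - 1) * occ_series n f m) $ j"
    by (simp only: sum_occupations_lower_pair[OF s] pair_series_mult_nth)
  finally show ?thesis .
qed

lemma gfun_eq_fermionic_nth:
  assumes "n \<ge> 4" "b \<in> Bset n"
  shows "gfun n j b (muwt n m) = qpoch j * fermionic_series n b m $ j"
  using assms(2)
proof (induction j arbitrary: b m)
  case 0
  with assms show ?case
    by (simp add: gfun_0 fermionic_series_nth_0 muwt_eq_0_iff)
next
  case (Suc j)
  have "gfun n (Suc j) b (muwt n m) = (\<Sum>c\<in>Bset n. qpower (int (Suc j) * H n b c) * gfun n j c (muwt n m - wt n c))"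
    by (rule gfun_Suc)
  also have "\<dots> = qpoch j * (\<Sum>c\<in>Bset n. qpower (H n b c * int (Suc j)) * fermionic_series n c (m - eps_wt c) $ j)"
    unfolding sum_distrib_left
  proof (rule sum.cong[OF refl])
    fix c assume c: "c \<in> Bset n"
    show "qpower (int (Suc j) * H n b c) * gfun n j c (muwt n m - wt n c)
      = qpoch j * (qpower (H n b c * int (Suc j)) * fermionic_series n c (m - eps_wt c) $ j)"
      by (simp only: muwt_diff_wt[OF assms(1) c] Suc.IH[OF c] mult_ac)
  qed
  also have "\<dots> = qpoch (Suc j) * fermionic_series n b m $ Suc j"
    using fermionic_series_nth_Suc[of n b j m] assms(1) Suc.prems by (simp add: qpoch_Suc)
  finally show ?case .
qed

theorem mainTheorem14:
  fixes n j :: nat and b :: bel and m :: "nat \<Rightarrow> int" and s :: nat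
  assumes "n \<ge> 4" and "b \<in> Bset n"
    and "s = (case b of U _ \<Rightarrow> 1 | Bar _ \<Rightarrow> n)"
  shows "gfun n j b (muwt n m) =
    (\<Sum>\<gamma>\<in>{\<gamma> :: bel \<Rightarrow> int. (\<forall>x\<in>Bset n. \<gamma> x \<ge> 0) \<and> (\<forall>x. x \<notin> Bset n \<longrightarrow> \<gamma> x = 0)
           \<and> (\<forall>i\<in>{1..n}. \<gamma> (U i) - \<gamma> (Bar i) = m i) \<and> (\<Sum>x\<in>Bset n. \<gamma> x) = int j}.
       qpow ((\<Sum>x\<in>Bset n. \<gamma> x * (\<gamma> x - 1)) div 2 - \<gamma> (U s) * \<gamma> (Bar s)
             + (\<Sum>x\<in>Bset n. H n b x * \<gamma> x))
       * qmultinom n j \<gamma>)"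
proof -
  have s: "s = pair_index n b" "1 \<le> s" "s \<le> n"
    using assms by (auto simp: pair_index_def split: bel.split)
  have "gfun n j b (muwt n m) = qpoch j * fermionic_series n b m $ j"
    using assms(1,2) by (rule gfun_eq_fermionic_nth)
  also have "\<dots> = qpoch j * (pair_series (H n b (U s) + H n b (Bar s) - 1) * occ_series n (H n b) m) $ j"
    by (simp add: fermionic_series_def pair_exponent_def s(1))
  also have "\<dots> = (\<Sum>\<gamma>\<in>occupations n m j. qpow ((\<Sum>x\<in>Bset n. \<gamma> x * (\<gamma> x - 1)) div 2 - \<gamma> (U s) * \<gamma> (Bar s)
      + (\<Sum>x\<in>Bset n. H n b x * \<gamma> x)) * qmultinom n j \<gamma>)"
    using s(2,3) by (rule fermionic_sum_eq_nth[symmetric])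
  finally show ?thesis
    by (simp only: occupations_def)
qed

end
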